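(* Let $p\in(0,1)$ and let $Y=[\xi_{ij}]$ be a $p$-robust random 0–1 matrix of size $n\times n$ (with otherwise arbitrary distribution). Then $$\Pr(Y\text{ has a perfect matching})\ge 1-(n+1)^3(1-p)^{\lfloor n/2\rfloor}.$$
   Context: A perfect matching of a 0–1 $n\times n$ matrix $Y$ is a choice of indices $((i_1,1),\dots,(i_n,n))$ with $\{i_1,\dots,i_n\}=\{1,\dots,n\}$ and $\xi_{i_j,j}=1$ for all $j$ (equivalently, a perfect matching of the bipartite graph with bi-adjacency matrix $Y$). In an $n\times n$ matrix, $(i,j)\prec(k,\ell)$ if $i<k$, or $i=k$ and $j<\ell$. $Y$ is $p$-robust if for every $(i,j)$, every set of positions $(i_1,j_1),\dots,(i_r,j_r)\prec(i,j)$ and every $a_1,\dots,a_r\in\{0,1\}$ with the conditioning event of positive probability, $\Pr(\xi_{ij}=1\mid\xi_{i_1j_1}=a_1,\dots,\xi_{i_rj_r}=a_r)\ge p$ (and $\Pr(\xi_{ij}=1)\ge p$). *)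

theory Defs
  imports "HOL-Probability.Probability"
begin

text \<open>An n x n 0-1 matrix is modelled as a function Y :: nat => nat => bool,
  where Y i j (for i, j < n, 0-based) is the entry xi_ij (True = 1).
  Entries outside the range are irrelevant. A random 0-1 matrix is a
  probability mass function on such matrices (every distribution on the
  finite set of n x n 0-1 matrices is discrete).\<close>

definition has_perfect_matching :: "nat \<Rightarrow> (nat \<Rightarrow> nat \<Rightarrow> bool) \<Rightarrow> bool" where
  "has_perfect_matching n Y \<longleftrightarrow>
     (\<exists>\<sigma>. bij_betw \<sigma> {..<n} {..<n} \<and> (\<forall>j<n. Y (\<sigma> j) j))"

definition pos_prec :: "nat \<times> nat \<Rightarrow> nat \<times> nat \<Rightarrow> bool" where
  "pos_prec x y \<longleftrightarrow> fst x < fst y \<or> (fst x = fst y \<and> snd x < snd y)"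

definition p_robust :: "real \<Rightarrow> nat \<Rightarrow> (nat \<Rightarrow> nat \<Rightarrow> bool) pmf \<Rightarrow> bool" where
  "p_robust p n Y \<longleftrightarrow>
     (\<forall>i<n. \<forall>j<n. \<forall>S a.
        S \<subseteq> {(k, l). k < n \<and> l < n \<and> pos_prec (k, l) (i, j)} \<longrightarrow>
        (let E = {M. \<forall>(k, l)\<in>S. M k l = a (k, l)} in
          measure_pmf.prob Y E > 0 \<longrightarrow>
          measure_pmf.prob Y (E \<inter> {M. M i j}) / measure_pmf.prob Y E \<ge> p))"

end

theory Submission
  imports Defs
begin

text \<open>If Y has no perfect matching, Hall's theorem yields a set C of columns whose
  neighbourhood is smaller than C; together with the rows outside that neighbourhood it spans
  an all-zero block R \<times> C with |R| + |C| = n + 1. Revealing the entries of a fixed set T of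
  positions in lexicographic order, p-robustness makes each of them vanish with conditional
  probability at most 1 - p, so T is all-zero with probability at most (1 - p)^|T|. The union
  bound over all blocks gives at most n + 2 terms C(n,r) C(n,n+1-r) (1-p)^(r(n+1-r)), and each
  is at most (n^2 (1-p)^(n div 2))^(min r (n+1-r)), which is at most n^2 (1-p)^(n div 2)
  unless the claimed bound is trivial anyway.\<close>

definition neighbours :: "('r \<Rightarrow> 'c \<Rightarrow> bool) \<Rightarrow> 'r set \<Rightarrow> 'c set \<Rightarrow> 'r set" where
  "neighbours Y B X = {i \<in> B. \<exists>j\<in>X. Y i j}"

definition hall_condition :: "('r \<Rightarrow> 'c \<Rightarrow> bool) \<Rightarrow> 'c set \<Rightarrow> 'r set \<Rightarrow> bool" where
  "hall_condition Y A B \<longleftrightarrow> (\<forall>X\<subseteq>A. card X \<le> card (neighbours Y B X))"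

definition matching_into :: "('r \<Rightarrow> 'c \<Rightarrow> bool) \<Rightarrow> 'c set \<Rightarrow> 'r set \<Rightarrow> ('c \<Rightarrow> 'r) \<Rightarrow> bool" where
  "matching_into Y A B \<sigma> \<longleftrightarrow> inj_on \<sigma> A \<and> (\<forall>j\<in>A. \<sigma> j \<in> B \<and> Y (\<sigma> j) j)"

lemma matching_into_split:
  assumes "matching_into Y X B' \<sigma>1" and "matching_into Y (A - X) (B - B') \<sigma>2" and "B' \<subseteq> B"
  shows "matching_into Y A B (\<lambda>j. if j \<in> X then \<sigma>1 j else \<sigma>2 j)"
proof -
  let ?\<sigma> = "\<lambda>j. if j \<in> X then \<sigma>1 j else \<sigma>2 j"
  have "?\<sigma> ` (A \<inter> X) \<subseteq> B'" "?\<sigma> ` (A - X) \<subseteq> B - B'"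
    using assms(1,2) unfolding matching_into_def by auto
  then have "?\<sigma> ` (A \<inter> X) \<inter> ?\<sigma> ` (A - X) = {}"
    by blast
  moreover have "inj_on ?\<sigma> (A \<inter> X)" "inj_on ?\<sigma> (A - X)"
    using assms(1,2) unfolding matching_into_def inj_on_def by auto
  moreover have "A \<inter> X - (A - X) = A \<inter> X" "A - X - A \<inter> X = A - X" by auto
  ultimately have "inj_on ?\<sigma> ((A \<inter> X) \<union> (A - X))"
    by (simp add: inj_on_Un)
  then show ?thesis
    using assms unfolding matching_into_def by (auto simp: Int_Diff_Un)
qed

lemma hall_condition_neighbours:
  assumes "hall_condition Y A B" and "X \<subseteq> A"
  shows "hall_condition Y X (neighbours Y B X)"
  unfolding hall_condition_def
proof (intro allI impI)
  fix Z assume "Z \<subseteq> X"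
  then have "neighbours Y (neighbours Y B X) Z = neighbours Y B Z"
    unfolding neighbours_def by auto
  moreover have "card Z \<le> card (neighbours Y B Z)"
    using assms \<open>Z \<subseteq> X\<close> unfolding hall_condition_def by blast
  ultimately show "card Z \<le> card (neighbours Y (neighbours Y B X) Z)" by simp
qed

lemma hall_condition_diff_critical:
  assumes hall: "hall_condition Y A B" and "finite A" and "X \<subseteq> A"
    and critical: "card (neighbours Y B X) = card X"
  shows "hall_condition Y (A - X) (B - neighbours Y B X)"
  unfolding hall_condition_def
proof (intro allI impI)
  fix Z assume Z: "Z \<subseteq> A - X"
  have "card Z + card X = card (Z \<union> X)"
    using Z \<open>finite A\<close> \<open>X \<subseteq> A\<close>
    by (intro card_Un_disjoint[symmetric]) (auto intro: finite_subset)
  also have "\<dots> \<le> card (neighbours Y B (Z \<union> X))"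
    using hall Z \<open>X \<subseteq> A\<close> unfolding hall_condition_def by blast
  also have "neighbours Y B (Z \<union> X) = neighbours Y (B - neighbours Y B X) Z \<union> neighbours Y B X"
    unfolding neighbours_def by auto
  also have "card \<dots> \<le> card (neighbours Y (B - neighbours Y B X) Z) + card X"
    unfolding critical[symmetric] by (rule card_Un_le)
  finally show "card Z \<le> card (neighbours Y (B - neighbours Y B X) Z)" by simp
qed

lemma hall_condition_remove_edge:
  assumes "finite B" and "a \<in> A"
    and surplus: "\<forall>X\<subseteq>A. X \<noteq> {} \<longrightarrow> X \<noteq> A \<longrightarrow> card X < card (neighbours Y B X)"
  shows "hall_condition Y (A - {a}) (B - {b})"
  unfolding hall_condition_def
proof (intro allI impI)
  fix Z assume Z: "Z \<subseteq> A - {a}"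
  show "card Z \<le> card (neighbours Y (B - {b}) Z)"
  proof (cases "Z = {}")
    case False
    with Z \<open>a \<in> A\<close> surplus have "card Z < card (neighbours Y B Z)" by blast
    moreover have "neighbours Y (B - {b}) Z = neighbours Y B Z - {b}"
      unfolding neighbours_def by auto
    moreover have "finite (neighbours Y B Z)"
      using \<open>finite B\<close> unfolding neighbours_def by simp
    ultimately show ?thesis by (simp add: card_Diff_singleton_if) arith
  qed simp
qed

text \<open>Induction on |A|: either some proper nonempty X \<subseteq> A is critical, and the problem splits
  into X with its neighbourhood and A - X with the remaining rows; or every such X has surplus,
  and any edge may be put into the matching.\<close>
theorem hall_marriage:
  assumes "finite A" and "finite B" and "hall_condition Y A B"
  shows "\<exists>\<sigma>. matching_into Y A B \<sigma>"
  using assms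
proof (induction "card A" arbitrary: A B rule: less_induct)
  case less
  show ?case
  proof (cases "\<exists>X. X \<subseteq> A \<and> X \<noteq> {} \<and> X \<noteq> A \<and> card (neighbours Y B X) = card X")
    case True
    then obtain X where X: "X \<subseteq> A" "X \<noteq> {}" "X \<noteq> A" "card (neighbours Y B X) = card X"
      by blast
    have "card X < card A" "card (A - X) < card A"
      using X(1-3) less.prems(1) by (auto intro: psubset_card_mono)
    moreover have "finite X" "finite (neighbours Y B X)"
      using X(1) less.prems(1,2) unfolding neighbours_def by (auto intro: finite_subset)
    ultimately obtain \<sigma>1 \<sigma>2 where
      \<sigma>1: "matching_into Y X (neighbours Y B X) \<sigma>1" and
      \<sigma>2: "matching_into Y (A - X) (B - neighbours Y B X) \<sigma>2"
      using less.hyps[OF _ _ _ hall_condition_neighbours[OF less.prems(3) X(1)]]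
        less.hyps[OF _ finite_Diff[OF less.prems(1)] finite_Diff[OF less.prems(2)]
          hall_condition_diff_critical[OF less.prems(3,1) X(1,4)]]
      by blast
    have "neighbours Y B X \<subseteq> B" unfolding neighbours_def by blast
    then show ?thesis using matching_into_split[OF \<sigma>1 \<sigma>2] by blast
  next
    case no_critical: False
    show ?thesis
    proof (cases "A = {}")
      case True
      then show ?thesis unfolding matching_into_def by simp
    next
      case False
      then obtain a where "a \<in> A" by blast
      have surplus: "\<forall>X\<subseteq>A. X \<noteq> {} \<longrightarrow> X \<noteq> A \<longrightarrow> card X < card (neighbours Y B X)"
      proof (intro allI impI)
        fix X assume "X \<subseteq> A" "X \<noteq> {}" "X \<noteq> A"
        then have "card X \<le> card (neighbours Y B X)" "card (neighbours Y B X) \<noteq> card X"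
          using less.prems(3) no_critical unfolding hall_condition_def by blast+
        then show "card X < card (neighbours Y B X)" by linarith
      qed
      have "card {a} \<le> card (neighbours Y B {a})"
        using less.prems(3) \<open>a \<in> A\<close> unfolding hall_condition_def by blast
      then have "neighbours Y B {a} \<noteq> {}" by auto
      then obtain b where "b \<in> B" "Y b a" unfolding neighbours_def by auto
      then have \<sigma>1: "matching_into Y {a} {b} (\<lambda>_. b)" by (simp add: matching_into_def)
      obtain \<sigma> where \<sigma>2: "matching_into Y (A - {a}) (B - {b}) \<sigma>"
        using less.hyps[OF card_Diff1_less[OF less.prems(1) \<open>a \<in> A\<close>]
            finite_Diff[OF less.prems(1)] finite_Diff[OF less.prems(2)]
            hall_condition_remove_edge[OF less.prems(2) \<open>a \<in> A\<close> surplus]]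
        by blast
      show ?thesis using matching_into_split[OF \<sigma>1 \<sigma>2] \<open>b \<in> B\<close> by blast
    qed
  qed
qed

lemma zero_block_if_no_perfect_matching:
  assumes "\<not> has_perfect_matching n M"
  obtains R C where "R \<subseteq> {..<n}" "C \<subseteq> {..<n}" "card R + card C = n + 1"
    "\<forall>i\<in>R. \<forall>j\<in>C. \<not> M i j"
proof -
  have "\<not> hall_condition M {..<n} {..<n}"
  proof
    assume "hall_condition M {..<n} {..<n}"
    then obtain \<sigma> where \<sigma>: "matching_into M {..<n} {..<n} \<sigma>"
      using hall_marriage by blast
    then have "\<sigma> ` {..<n} = {..<n}"
      by (intro endo_inj_surj) (auto simp: matching_into_def)
    with \<sigma> have "bij_betw \<sigma> {..<n} {..<n}"
      by (simp add: matching_into_def bij_betw_def)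
    with \<sigma> assms show False
      unfolding has_perfect_matching_def matching_into_def by blast
  qed
  then obtain C where C: "C \<subseteq> {..<n}" "card (neighbours M {..<n} C) < card C"
    unfolding hall_condition_def by (auto simp: not_le)
  define N where "N = neighbours M {..<n} C"
  have "N \<subseteq> {..<n}" unfolding N_def neighbours_def by auto
  then have "card ({..<n} - N) = n - card N"
    by (simp add: card_Diff_subset finite_subset)
  moreover have "card C \<le> n"
    using C(1) by (metis card_lessThan card_mono finite_lessThan)
  ultimately have "n + 1 - card C \<le> card ({..<n} - N)"
    using C(2) unfolding N_def by linarith
  then obtain R where R: "R \<subseteq> {..<n} - N" "card R = n + 1 - card C"
    by (meson obtain_subset_with_card_n)
  show thesis
  proof (rule that)
    show "R \<subseteq> {..<n}" using R(1) by blast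
    show "card R + card C = n + 1" using R(2) \<open>card C \<le> n\<close> by simp
    show "\<forall>i\<in>R. \<forall>j\<in>C. \<not> M i j" using R(1) unfolding N_def neighbours_def by blast
  qed fact
qed

lemma exists_pos_prec_greatest:
  assumes "finite T" and "T \<noteq> {}"
  obtains t where "t \<in> T" "\<forall>x\<in>T - {t}. pos_prec x t"
proof -
  from assms have "\<exists>t\<in>T. \<forall>x\<in>T - {t}. pos_prec x t"
  proof (induction rule: finite_ne_induct)
    case (insert x F)
    then obtain t where t: "t \<in> F" "\<forall>y\<in>F - {t}. pos_prec y t" by blast
    show ?case
    proof (cases "pos_prec t x")
      case True
      have "pos_prec y x" if "y \<in> F" for y
      proof -
        have "y = t \<or> pos_prec y t" using t(2) that by blast
        with True show ?thesis unfolding pos_prec_def by auto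
      qed
      then show ?thesis by blast
    next
      case False
      then have "x = t \<or> pos_prec x t" unfolding pos_prec_def by (auto simp: prod_eq_iff)
      then show ?thesis using t by blast
    qed
  qed simp
  then show thesis using that by blast
qed

definition zeros_on :: "(nat \<times> nat) set \<Rightarrow> (nat \<Rightarrow> nat \<Rightarrow> bool) set" where
  "zeros_on T = {M. \<forall>(k, l)\<in>T. \<not> M k l}"

lemma p_robust_prob_zeros_on_insert:
  assumes robust: "p_robust p n Y" and "i < n" and "j < n"
    and S: "S \<subseteq> {(k, l). k < n \<and> l < n \<and> pos_prec (k, l) (i, j)}"
  shows "measure_pmf.prob Y (zeros_on (insert (i, j) S))
           \<le> (1 - p) * measure_pmf.prob Y (zeros_on S)"
proof -
  let ?P = "measure_pmf.prob Y" and ?E = "zeros_on S" and ?one = "{M. M i j}"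
  have "?E = {M. \<forall>(k, l)\<in>S. M k l = (\<lambda>_. False) (k, l)}"
    unfolding zeros_on_def by auto
  then have conditional: "?P ?E > 0 \<Longrightarrow> p \<le> ?P (?E \<inter> ?one) / ?P ?E"
    using robust[unfolded p_robust_def Let_def, rule_format, where a = "\<lambda>_. False",
        OF \<open>i < n\<close> \<open>j < n\<close> S] by simp
  have "zeros_on (insert (i, j) S) = ?E - ?one"
    unfolding zeros_on_def by auto
  moreover have "?P (?E - ?one) \<le> (1 - p) * ?P ?E"
  proof (cases "?P ?E > 0")
    case True
    then have "p * ?P ?E \<le> ?P (?E \<inter> ?one)"
      using conditional by (simp add: le_divide_eq)
    moreover have "?P (?E - ?one) = ?P ?E - ?P (?E \<inter> ?one)"
      by (rule measure_pmf.finite_measure_Diff') auto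
    ultimately show ?thesis by (simp add: algebra_simps)
  next
    case False
    then have "?P ?E = 0" using measure_nonneg[of "measure_pmf Y" ?E] by linarith
    moreover have "?P (?E - ?one) \<le> ?P ?E"
      by (rule measure_pmf.finite_measure_mono) auto
    ultimately show ?thesis by simp
  qed
  ultimately show ?thesis by simp
qed

lemma p_robust_prob_zeros_on:
  assumes robust: "p_robust p n Y" and "p \<le> 1"
    and "finite T" and "T \<subseteq> {..<n} \<times> {..<n}"
  shows "measure_pmf.prob Y (zeros_on T) \<le> (1 - p) ^ card T"
  using assms(3,4)
proof (induction "card T" arbitrary: T)
  case 0
  then show ?case by (simp add: measure_pmf.prob_le_1)
next
  case (Suc c)
  then have "T \<noteq> {}" by auto
  with Suc.prems(1) obtain i j where ij: "(i, j) \<in> T" "\<forall>x\<in>T - {(i, j)}. pos_prec x (i, j)"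
    by (metis exists_pos_prec_greatest surj_pair)
  define S where "S = T - {(i, j)}"
  have T: "T = insert (i, j) S" and "card S = c"
    using ij(1) Suc.hyps(2) Suc.prems(1) unfolding S_def by auto
  have "S \<subseteq> {(k, l). k < n \<and> l < n \<and> pos_prec (k, l) (i, j)}"
    using ij(2) Suc.prems(2) unfolding S_def by auto
  moreover have "i < n" "j < n" using ij(1) Suc.prems(2) by auto
  ultimately have "measure_pmf.prob Y (zeros_on T) \<le> (1 - p) * measure_pmf.prob Y (zeros_on S)"
    unfolding T by (intro p_robust_prob_zeros_on_insert[OF robust])
  also have "\<dots> \<le> (1 - p) * (1 - p) ^ c"
    using Suc.hyps(1)[of S] \<open>card S = c\<close> Suc.prems \<open>p \<le> 1\<close> unfolding S_def
    by (intro mult_left_mono) auto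
  finally show ?case by (simp add: Suc.hyps(2)[symmetric])
qed

lemma binomial_le_pow_min:
  assumes "k \<le> n"
  shows "n choose k \<le> n ^ min k (n - k)"
proof (cases "k \<le> n - k")
  case True
  then show ?thesis using binomial_le_pow[OF assms] by simp
next
  case False
  have "n choose k = n choose (n - k)" using assms by (rule binomial_symmetric)
  also have "\<dots> \<le> n ^ (n - k)" by (rule binomial_le_pow) simp
  finally show ?thesis using False by simp
qed

lemma binomial_block_term_le:
  fixes q :: real
  assumes "0 \<le> q" and "q \<le> 1" and small: "real n ^ 2 * q ^ (n div 2) \<le> 1" and "r \<le> n + 1"
  shows "real (n choose r) * real (n choose (n + 1 - r)) * q ^ (r * (n + 1 - r))
           \<le> real n ^ 2 * q ^ (n div 2)"
proof (cases "r = 0 \<or> r = n + 1")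
  case True
  then show ?thesis using \<open>0 \<le> q\<close> by (auto simp: binomial_eq_0)
next
  case False
  define c where "c = n + 1 - r"
  define s where "s = min r c"
  define m where "m = n div 2"
  have rc: "1 \<le> r" "1 \<le> c" "r + c = n + 1" "1 \<le> s"
    using False \<open>r \<le> n + 1\<close> unfolding c_def s_def by auto
  have "n choose r \<le> n ^ min r (n - r)" "n choose c \<le> n ^ min c (n - c)"
    using rc by (intro binomial_le_pow_min; simp)+
  moreover have "n ^ min r (n - r) \<le> n ^ s" "n ^ min c (n - c) \<le> n ^ s"
    using rc unfolding s_def by (intro power_increasing; simp)+
  ultimately have binomials: "real (n choose r) * real (n choose c) \<le> real n ^ s * real n ^ s"
    by (intro mult_mono) (auto simp flip: of_nat_power)
  have "s * m \<le> r * c" \<comment> \<open>max r c \<ge> (n + 1) / 2 \<ge> m\<close>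
    using rc unfolding s_def m_def by (cases "r \<le> c") (auto intro: mult_mono)
  then have powers: "q ^ (r * c) \<le> q ^ (s * m)"
    using \<open>0 \<le> q\<close> \<open>q \<le> 1\<close> by (rule power_decreasing)
  have "real (n choose r) * real (n choose c) * q ^ (r * c)
      \<le> real n ^ s * real n ^ s * q ^ (s * m)"
    by (rule mult_mono[OF binomials powers]) (simp_all add: \<open>0 \<le> q\<close>)
  also have "\<dots> = (real n ^ 2 * q ^ m) ^ s"
    by (simp add: power_mult power_mult_distrib power2_eq_square mult.commute)
  also have "\<dots> \<le> real n ^ 2 * q ^ m"
    using power_decreasing[OF \<open>1 \<le> s\<close>, of "real n ^ 2 * q ^ m"] small \<open>0 \<le> q\<close>
    unfolding m_def by simp
  finally show ?thesis unfolding c_def m_def .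
qed

lemma block_sum_le:
  fixes q :: real
  assumes "0 \<le> q" and "q \<le> 1" and "real n ^ 2 * q ^ (n div 2) \<le> 1"
  shows "(\<Sum>r\<le>n + 1. real (n choose r) * real (n choose (n + 1 - r)) * q ^ (r * (n + 1 - r)))
           \<le> real (n + 1) ^ 3 * q ^ (n div 2)"
proof -
  have "(\<Sum>r\<le>n + 1. real (n choose r) * real (n choose (n + 1 - r)) * q ^ (r * (n + 1 - r)))
      \<le> (\<Sum>r\<le>n + 1. real n ^ 2 * q ^ (n div 2))"
    using assms by (intro sum_mono binomial_block_term_le) auto
  also have "\<dots> = (real (n + 2) * real n ^ 2) * q ^ (n div 2)" by simp
  also have "\<dots> \<le> real (n + 1) ^ 3 * q ^ (n div 2)"
    using \<open>0 \<le> q\<close> by (intro mult_right_mono) (simp_all add: power2_eq_square power3_eq_cube algebra_simps)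
  finally show ?thesis .
qed

lemma prob_no_perfect_matching_le:
  assumes robust: "p_robust p n Y" and "p \<le> 1"
  shows "measure_pmf.prob Y {M. \<not> has_perfect_matching n M}
           \<le> (\<Sum>r\<le>n + 1. real (n choose r) * real (n choose (n + 1 - r)) * (1 - p) ^ (r * (n + 1 - r)))"
proof -
  let ?P = "measure_pmf.prob Y"
  define subsets where "subsets r = {R. R \<subseteq> {..<n} \<and> card R = r}" for r
  have fin: "finite (subsets r)" for r unfolding subsets_def by simp
  have "{M. \<not> has_perfect_matching n M}
      \<subseteq> (\<Union>r\<le>n + 1. \<Union>R\<in>subsets r. \<Union>C\<in>subsets (n + 1 - r). zeros_on (R \<times> C))"
  proof
    fix M assume "M \<in> {M. \<not> has_perfect_matching n M}"
    then obtain R C where "R \<subseteq> {..<n}" "C \<subseteq> {..<n}" "card R + card C = n + 1"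
        "\<forall>i\<in>R. \<forall>j\<in>C. \<not> M i j"
      by (auto elim: zero_block_if_no_perfect_matching)
    then have "card R \<le> n + 1" "R \<in> subsets (card R)" "C \<in> subsets (n + 1 - card R)"
        "M \<in> zeros_on (R \<times> C)"
      unfolding subsets_def zeros_on_def by auto
    then show "M \<in> (\<Union>r\<le>n + 1. \<Union>R\<in>subsets r. \<Union>C\<in>subsets (n + 1 - r). zeros_on (R \<times> C))"
      by blast
  qed
  then have "?P {M. \<not> has_perfect_matching n M}
      \<le> ?P (\<Union>r\<le>n + 1. \<Union>R\<in>subsets r. \<Union>C\<in>subsets (n + 1 - r). zeros_on (R \<times> C))"
    by (intro measure_pmf.finite_measure_mono) auto
  also have "\<dots> \<le> (\<Sum>r\<le>n + 1. ?P (\<Union>R\<in>subsets r. \<Union>C\<in>subsets (n + 1 - r). zeros_on (R \<times> C)))"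
    by (intro measure_pmf.finite_measure_subadditive_finite) auto
  also have "\<dots> \<le> (\<Sum>r\<le>n + 1. \<Sum>R\<in>subsets r. ?P (\<Union>C\<in>subsets (n + 1 - r). zeros_on (R \<times> C)))"
    by (intro sum_mono measure_pmf.finite_measure_subadditive_finite fin) auto
  also have "\<dots> \<le> (\<Sum>r\<le>n + 1. \<Sum>R\<in>subsets r. \<Sum>C\<in>subsets (n + 1 - r). ?P (zeros_on (R \<times> C)))"
    by (intro sum_mono measure_pmf.finite_measure_subadditive_finite fin) auto
  also have "\<dots> \<le> (\<Sum>r\<le>n + 1. \<Sum>R\<in>subsets r. \<Sum>C\<in>subsets (n + 1 - r). (1 - p) ^ (r * (n + 1 - r)))"
  proof (intro sum_mono)
    fix r R C assume "R \<in> subsets r" "C \<in> subsets (n + 1 - r)"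
    then have "finite (R \<times> C)" "R \<times> C \<subseteq> {..<n} \<times> {..<n}" "card (R \<times> C) = r * (n + 1 - r)"
      unfolding subsets_def by (auto intro: finite_subset simp: card_cartesian_product)
    then show "?P (zeros_on (R \<times> C)) \<le> (1 - p) ^ (r * (n + 1 - r))"
      using p_robust_prob_zeros_on[OF robust \<open>p \<le> 1\<close>, of "R \<times> C"] by simp
  qed
  also have "\<dots> = (\<Sum>r\<le>n + 1. real (n choose r) * real (n choose (n + 1 - r)) * (1 - p) ^ (r * (n + 1 - r)))"
    by (simp add: subsets_def n_subsets mult.assoc)
  finally show ?thesis .
qed

theorem theorem5:
  fixes p :: real and n :: nat and Y :: "(nat \<Rightarrow> nat \<Rightarrow> bool) pmf"
  assumes "0 < p" and "p < 1"
    and "p_robust p n Y"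
  shows "measure_pmf.prob Y {M. has_perfect_matching n M}
           \<ge> 1 - real (n + 1) ^ 3 * (1 - p) ^ (n div 2)"
proof -
  have q: "0 \<le> 1 - p" "1 - p \<le> 1" using assms(1,2) by auto
  show ?thesis
  proof (cases "real n ^ 2 * (1 - p) ^ (n div 2) \<le> 1")
    case True
    have "measure_pmf.prob Y {M. \<not> has_perfect_matching n M}
        \<le> (\<Sum>r\<le>n + 1. real (n choose r) * real (n choose (n + 1 - r)) * (1 - p) ^ (r * (n + 1 - r)))"
      using assms(2) by (intro prob_no_perfect_matching_le[OF assms(3)]) simp
    also have "\<dots> \<le> real (n + 1) ^ 3 * (1 - p) ^ (n div 2)"
      using q True by (rule block_sum_le)
    moreover have "measure_pmf.prob Y {M. has_perfect_matching n M}
        = 1 - measure_pmf.prob Y {M. \<not> has_perfect_matching n M}"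
      using measure_pmf.prob_compl[of "{M. \<not> has_perfect_matching n M}" Y]
      by (simp add: set_diff_eq)
    ultimately show ?thesis by linarith
  next
    case False
    have "real n ^ 2 * (1 - p) ^ (n div 2) \<le> real (n + 1) ^ 3 * (1 - p) ^ (n div 2)"
      using q by (intro mult_right_mono) (simp_all add: power2_eq_square power3_eq_cube algebra_simps)
    then show ?thesis
      using False measure_nonneg[of "measure_pmf Y" "{M. has_perfect_matching n M}"] by linarith
  qed
qed

end
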